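(* Let $k\ge 2$, let $\mathbf V_1,\ldots,\mathbf V_k$ and $\mathbf Q$ be $p\times p$ positive definite matrices, $\mathbf A=(\sum_{i=1}^k\mathbf V_i^{-1})^{-1}$, and $d_1,\ldots,d_k$ real constants. For $\mathbf x_1,\ldots,\mathbf x_k\in\mathbb R^p$, not all equal, let $\hat{\boldsymbol\nu}=\mathbf A\sum_{i=1}^k\mathbf V_i^{-1}\mathbf x_i$ and $$B(\mathbf x_1,\ldots,\mathbf x_k)=\frac{\{\sum_{i=1}^k d_i(\mathbf x_i-\hat{\boldsymbol\nu})\}^\top\mathbf Q\{\sum_{i=1}^k d_i(\mathbf x_i-\hat{\boldsymbol\nu})\}}{\sum_{j=1}^k(\mathbf x_j-\hat{\boldsymbol\nu})^\top\mathbf V_j^{-1}(\mathbf x_j-\hat{\boldsymbol\nu})}.$$ Then $$B(\mathbf x_1,\ldots,\mathbf x_k)\le \mathrm{Ch}_{\max}\Big(\Big(\sum_{i=1}^k d_i^2\mathbf V_i-\Big(\sum_{i=1}^k d_i\Big)^2\mathbf A\Big)\mathbf Q\Big).$$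
   Context: $\mathrm{Ch}_{\max}(\mathbf C)$ denotes the maximum characteristic value (eigenvalue) of the matrix $\mathbf C$. *)

theory Defs
  imports "HOL-Analysis.Analysis"
begin

definition pos_def_mat :: "real^'p^'p \<Rightarrow> bool" where
  "pos_def_mat M \<longleftrightarrow> transpose M = M \<and> (\<forall>x. x \<noteq> 0 \<longrightarrow> x \<bullet> (M *v x) > 0)"

definition real_eigenvalues :: "real^'p^'p \<Rightarrow> real set" where
  "real_eigenvalues M = {l. \<exists>v. v \<noteq> 0 \<and> M *v v = l *\<^sub>R v}"

definition Ch_max :: "real^'p^'p \<Rightarrow> real" where
  "Ch_max M = Max (real_eigenvalues M)"

end

theory Submission
  imports Defs
begin

text \<open>
  Write \<open>y\<^sub>i = x\<^sub>i - \<nu>\<close>; the choice of \<open>\<nu>\<close> makes \<open>\<Sum> V\<^sub>i\<^sup>-\<^sup>1 y\<^sub>i = 0\<close>.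
  For any \<open>w\<close> put \<open>a\<^sub>i = d\<^sub>i V\<^sub>i w - (\<Sum>d) A w\<close>. This balance gives
  \<open>w \<bullet> \<Sum> d\<^sub>i y\<^sub>i = \<Sum> a\<^sub>i \<bullet> V\<^sub>i\<^sup>-\<^sup>1 y\<^sub>i\<close>, while expanding shows
  \<open>\<Sum> a\<^sub>i \<bullet> V\<^sub>i\<^sup>-\<^sup>1 a\<^sub>i = w \<bullet> M w\<close> with \<open>M = \<Sum> d\<^sub>i\<^sup>2 V\<^sub>i - (\<Sum>d)\<^sup>2 A\<close>.
  Cauchy--Schwarz for the forms \<open>V\<^sub>i\<^sup>-\<^sup>1\<close> then bounds \<open>(w \<bullet> u)\<^sup>2\<close> by
  \<open>(w \<bullet> M w)\<close> times the denominator of \<open>B\<close>. Finally \<open>Ch\<^sub>m\<^sub>a\<^sub>x(M Q)\<close> is the maximum of the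
  generalized Rayleigh quotient \<open>w \<bullet> M w / w \<bullet> Q\<^sup>-\<^sup>1 w\<close> (the eigenvalues of \<open>M Q\<close> are those of
  the pencil \<open>M w = \<mu> Q\<^sup>-\<^sup>1 w\<close>), and the choice \<open>w = Q u\<close> gives the claim.
\<close>

section \<open>Positive definite matrices\<close>

lemma invertible_matrix_inv:
  fixes A :: "'a::semiring_1^'n^'m"
  assumes "invertible A"
  shows "A ** matrix_inv A = mat 1" and "matrix_inv A ** A = mat 1"
proof -
  have "A ** matrix_inv A = mat 1 \<and> matrix_inv A ** A = mat 1"
    using assms unfolding invertible_def matrix_inv_def by (rule someI_ex)
  then show "A ** matrix_inv A = mat 1" "matrix_inv A ** A = mat 1" by auto
qed

lemma invertible_matrix_inv_cancel:
  fixes A :: "'a::comm_semiring_1^'n^'m"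
  assumes "invertible A"
  shows "A *v (matrix_inv A *v x) = x" and "matrix_inv A *v (A *v y) = y"
  using invertible_matrix_inv[OF assms] by (simp_all add: matrix_vector_mul_assoc)

lemma sum_matrix_vector_mult:
  fixes f :: "'i \<Rightarrow> 'a::semiring_1^'n^'m"
  shows "sum f S *v x = (\<Sum>i\<in>S. f i *v x)"
  by (induction S rule: infinite_finite_induct) (auto simp: matrix_vector_mult_add_rdistrib)

lemma transpose_sum: "transpose (sum f S) = (\<Sum>i\<in>S. transpose (f i))"
  by (simp add: transpose_def vec_eq_iff)

lemma transpose_diff: "transpose (A - B) = transpose A - transpose (B :: 'a::ab_group_add^'n^'m)"
  by (simp add: transpose_def vec_eq_iff)

lemma symmetric_matrix_inner_commute:
  fixes M :: "real^'n^'n"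
  assumes "transpose M = M"
  shows "x \<bullet> (M *v y) = y \<bullet> (M *v x)"
proof -
  have "x \<bullet> (M *v y) = (transpose M *v x) \<bullet> y"
    by (simp flip: dot_lmul_matrix)
  then show ?thesis
    using assms by (simp add: inner_commute)
qed

lemma pos_def_mat_symmetric: "pos_def_mat M \<Longrightarrow> transpose M = M"
  by (simp add: pos_def_mat_def)

lemma pos_def_mat_pos: "pos_def_mat M \<Longrightarrow> x \<noteq> 0 \<Longrightarrow> 0 < x \<bullet> (M *v x)"
  by (simp add: pos_def_mat_def)

lemma pos_def_mat_nonneg: "pos_def_mat M \<Longrightarrow> 0 \<le> x \<bullet> (M *v x)"
  by (cases "x = 0") (auto simp: pos_def_mat_def less_imp_le)

lemma pos_def_mat_invertible:
  assumes "pos_def_mat M"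
  shows "invertible M"
proof -
  have "x = 0" if "M *v x = 0" for x
    using pos_def_mat_pos[OF assms, of x] that by force
  then show ?thesis
    using invertible_left_inverse matrix_left_invertible_ker by blast
qed

lemma pos_def_mat_matrix_inv:
  fixes M :: "real^'p^'p"
  assumes M: "pos_def_mat M"
  shows "pos_def_mat (matrix_inv M)"
  unfolding pos_def_mat_def
proof (intro conjI allI impI)
  have "transpose (matrix_inv M) = transpose (matrix_inv M) ** (M ** matrix_inv M)"
    using invertible_matrix_inv(1)[OF pos_def_mat_invertible[OF M]] by simp
  also have "\<dots> = transpose (M ** matrix_inv M) ** matrix_inv M"
    using pos_def_mat_symmetric[OF M] by (simp add: matrix_transpose_mul matrix_mul_assoc)
  also have "\<dots> = matrix_inv M"
    using invertible_matrix_inv(1)[OF pos_def_mat_invertible[OF M]] by simp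
  finally show "transpose (matrix_inv M) = matrix_inv M" .
next
  fix x :: "real^'p" assume "x \<noteq> 0"
  define y where "y = matrix_inv M *v x"
  have My: "M *v y = x"
    unfolding y_def by (rule invertible_matrix_inv_cancel(1)[OF pos_def_mat_invertible[OF M]])
  with \<open>x \<noteq> 0\<close> have "0 < y \<bullet> (M *v y)"
    by (auto intro: pos_def_mat_pos[OF M])
  then show "0 < x \<bullet> (matrix_inv M *v x)"
    by (simp add: My inner_commute flip: y_def)
qed

lemma pos_def_mat_sum:
  fixes f :: "'i \<Rightarrow> real^'p^'p"
  assumes "finite S" "S \<noteq> {}" "\<forall>i\<in>S. pos_def_mat (f i)"
  shows "pos_def_mat (sum f S)"
  unfolding pos_def_mat_def
proof (intro conjI allI impI)
  show "transpose (sum f S) = sum f S"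
    using assms(3) by (simp add: transpose_sum pos_def_mat_symmetric)
next
  fix x :: "real^'p" assume "x \<noteq> 0"
  then show "0 < x \<bullet> (sum f S *v x)"
    unfolding sum_matrix_vector_mult inner_sum_right
    using assms by (intro sum_pos) (auto intro: pos_def_mat_pos)
qed

section \<open>Quadratic forms\<close>

lemma quadratic_nonneg_imp_discriminant_le:
  fixes a b c :: real
  assumes "0 \<le> c" and nonneg: "\<And>t. 0 \<le> a + 2 * t * b + t\<^sup>2 * c"
  shows "b\<^sup>2 \<le> a * c"
proof (cases "c = 0")
  case True
  have "b = 0"
  proof (rule ccontr)
    assume "b \<noteq> 0"
    then have "a + 2 * (- (a + 1) / (2 * b)) * b = -1"
      by (simp add: field_simps)
    then show False
      using nonneg[of "- (a + 1) / (2 * b)"] True by simp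
  qed
  then show ?thesis using True by simp
next
  case False
  with \<open>0 \<le> c\<close> have "0 < c" by simp
  have "0 \<le> a + 2 * (- b / c) * b + (- b / c)\<^sup>2 * c"
    by (rule nonneg)
  also have "\<dots> = (a * c - b\<^sup>2) / c"
    using \<open>0 < c\<close> by (simp add: field_simps power2_eq_square)
  finally show ?thesis
    using \<open>0 < c\<close> by (simp add: zero_le_divide_iff)
qed

lemma quadratic_form_add:
  fixes M :: "real^'n^'n"
  assumes "transpose M = M"
  shows "(v + t *\<^sub>R r) \<bullet> (M *v (v + t *\<^sub>R r)) =
    v \<bullet> (M *v v) + 2 * t * (r \<bullet> (M *v v)) + t\<^sup>2 * (r \<bullet> (M *v r))"
  using symmetric_matrix_inner_commute[OF assms, of v r]
  by (simp add: matrix_vector_right_distrib matrix_vector_mult_scaleR inner_add_left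
      inner_add_right power2_eq_square algebra_simps)

lemma psd_quadratic_form_eq_0_imp_mult_eq_0:
  fixes N :: "real^'n^'n"
  assumes sym: "transpose N = N" and psd: "\<And>w. 0 \<le> w \<bullet> (N *v w)"
    and zero: "v \<bullet> (N *v v) = 0"
  shows "N *v v = 0"
proof -
  define r where "r = N *v v"
  have "0 \<le> 0 + 2 * t * (- (r \<bullet> r)) + t\<^sup>2 * (r \<bullet> (N *v r))" for t
    using psd[of "v + (- t) *\<^sub>R r"]
    unfolding quadratic_form_add[OF sym] zero by (simp add: r_def power2_eq_square)
  then have "(- (r \<bullet> r))\<^sup>2 \<le> 0 * (r \<bullet> (N *v r))"
    using psd by (intro quadratic_nonneg_imp_discriminant_le)
  then show ?thesis
    unfolding r_def by simp
qed

lemma sum_quadratic_forms_Cauchy_Schwarz: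
  fixes G :: "'i \<Rightarrow> real^'n^'n"
  assumes sym: "\<forall>i\<in>S. transpose (G i) = G i"
    and psd: "\<forall>i\<in>S. \<forall>z. 0 \<le> z \<bullet> (G i *v z)"
  shows "(\<Sum>i\<in>S. a i \<bullet> (G i *v y i))\<^sup>2
    \<le> (\<Sum>i\<in>S. a i \<bullet> (G i *v a i)) * (\<Sum>i\<in>S. y i \<bullet> (G i *v y i))"
proof (rule quadratic_nonneg_imp_discriminant_le)
  show "0 \<le> (\<Sum>i\<in>S. y i \<bullet> (G i *v y i))"
    using psd by (intro sum_nonneg) auto
next
  fix t :: real
  have "0 \<le> (\<Sum>i\<in>S. (a i + t *\<^sub>R y i) \<bullet> (G i *v (a i + t *\<^sub>R y i)))"
    using psd by (intro sum_nonneg) auto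
  also have "\<dots> = (\<Sum>i\<in>S. a i \<bullet> (G i *v a i) + 2 * t * (a i \<bullet> (G i *v y i))
      + t\<^sup>2 * (y i \<bullet> (G i *v y i)))"
  proof (rule sum.cong[OF refl])
    fix i assume "i \<in> S"
    then have "transpose (G i) = G i" using sym by blast
    then show "(a i + t *\<^sub>R y i) \<bullet> (G i *v (a i + t *\<^sub>R y i)) = a i \<bullet> (G i *v a i)
        + 2 * t * (a i \<bullet> (G i *v y i)) + t\<^sup>2 * (y i \<bullet> (G i *v y i))"
      by (simp add: quadratic_form_add symmetric_matrix_inner_commute[of "G i" "y i" "a i"])
  qed
  also have "\<dots> = (\<Sum>i\<in>S. a i \<bullet> (G i *v a i)) + 2 * t * (\<Sum>i\<in>S. a i \<bullet> (G i *v y i))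
      + t\<^sup>2 * (\<Sum>i\<in>S. y i \<bullet> (G i *v y i))"
    by (simp add: sum.distrib sum_distrib_left)
  finally show "0 \<le> \<dots>" .
qed

section \<open>Generalized eigenvalues and \<open>Ch_max\<close>\<close>

definition generalized_eigenvalues :: "real^'n^'n \<Rightarrow> real^'n^'n \<Rightarrow> real set" where
  "generalized_eigenvalues M P = {\<mu>. \<exists>w. w \<noteq> 0 \<and> M *v w = \<mu> *\<^sub>R (P *v w)}"

lemma real_eigenvalues_mult_eq_generalized_eigenvalues:
  fixes M Q :: "real^'n^'n"
  assumes Q: "invertible Q"
  shows "real_eigenvalues (M ** Q) = generalized_eigenvalues M (matrix_inv Q)"
proof (intro set_eqI iffI)
  fix \<mu> assume "\<mu> \<in> real_eigenvalues (M ** Q)"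
  then obtain z where "z \<noteq> 0" "M *v (Q *v z) = \<mu> *\<^sub>R z"
    unfolding real_eigenvalues_def by (auto simp: matrix_vector_mul_assoc)
  moreover have "Q *v z \<noteq> 0"
    using \<open>z \<noteq> 0\<close> invertible_matrix_inv_cancel(2)[OF Q, of z] by auto
  ultimately show "\<mu> \<in> generalized_eigenvalues M (matrix_inv Q)"
    unfolding generalized_eigenvalues_def
    by (auto simp: invertible_matrix_inv_cancel(2)[OF Q] intro!: exI[of _ "Q *v z"])
next
  fix \<mu> assume "\<mu> \<in> generalized_eigenvalues M (matrix_inv Q)"
  then obtain w where "w \<noteq> 0" "M *v w = \<mu> *\<^sub>R (matrix_inv Q *v w)"
    unfolding generalized_eigenvalues_def by auto
  moreover have "matrix_inv Q *v w \<noteq> 0"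
    using \<open>w \<noteq> 0\<close> invertible_matrix_inv_cancel(1)[OF Q, of w] by auto
  ultimately show "\<mu> \<in> real_eigenvalues (M ** Q)"
    unfolding real_eigenvalues_def
    by (auto simp: invertible_matrix_inv_cancel(1)[OF Q] matrix_vector_mul_assoc[symmetric]
        intro!: exI[of _ "matrix_inv Q *v w"])
qed

lemma generalized_Rayleigh_quotient_attains_max:
  fixes M P :: "real^'n^'n"
  assumes P: "pos_def_mat P"
  obtains l v where "v \<noteq> 0" "v \<bullet> (M *v v) = l * (v \<bullet> (P *v v))"
    and "\<And>w. w \<bullet> (M *v w) \<le> l * (w \<bullet> (P *v w))"
proof -
  define f where "f w = (w \<bullet> (M *v w)) / (w \<bullet> (P *v w))" for w :: "real^'n"
  have f_scale: "f (c *\<^sub>R w) = f w" if "c \<noteq> 0" for c w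
    using that by (simp add: f_def matrix_vector_mult_scaleR power2_eq_square)
  have "continuous_on (sphere 0 1) f"
    unfolding f_def using pos_def_mat_pos[OF P]
    by (intro continuous_intros) (metis less_irrefl mem_sphere_0 norm_zero zero_neq_one)
  moreover have "sphere (0::real^'n) 1 \<noteq> {}"
    by (metis norm_axis_1 mem_sphere_0 empty_iff)
  ultimately obtain v where v: "v \<in> sphere 0 1" and max: "\<And>u. u \<in> sphere 0 1 \<Longrightarrow> f u \<le> f v"
    using continuous_attains_sup[OF compact_sphere] by blast
  have "v \<noteq> 0" using v by auto
  moreover have "v \<bullet> (M *v v) = f v * (v \<bullet> (P *v v))"
    using pos_def_mat_pos[OF P \<open>v \<noteq> 0\<close>] by (simp add: f_def)
  moreover have "w \<bullet> (M *v w) \<le> f v * (w \<bullet> (P *v w))" for w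
  proof (cases "w = 0")
    case False
    then have "f w \<le> f v"
      using max[of "(1 / norm w) *\<^sub>R w"] f_scale[of "1 / norm w" w] by simp
    then show ?thesis
      using pos_def_mat_pos[OF P False] by (simp add: f_def divide_le_eq)
  qed simp
  ultimately show ?thesis by (rule that)
qed

lemma generalized_Rayleigh_maximizer_eigenvector:
  fixes M P :: "real^'n^'n"
  assumes "transpose M = M" "transpose P = P"
    and bound: "\<And>w. w \<bullet> (M *v w) \<le> l * (w \<bullet> (P *v w))"
    and attained: "v \<bullet> (M *v v) = l * (v \<bullet> (P *v v))"
  shows "M *v v = l *\<^sub>R (P *v v)"
proof -
  define N where "N = l *\<^sub>R P - M"
  have N_mult: "N *v w = l *\<^sub>R (P *v w) - M *v w" for w
    by (simp add: N_def matrix_vector_mult_diff_rdistrib scaleR_matrix_vector_assoc)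
  have "transpose N = N"
    using assms(1,2) by (simp add: N_def transpose_diff transpose_scalar)
  moreover have "0 \<le> w \<bullet> (N *v w)" for w
    using bound[of w] by (simp add: N_mult inner_diff_right)
  moreover have "v \<bullet> (N *v v) = 0"
    using attained by (simp add: N_mult inner_diff_right)
  ultimately have "N *v v = 0"
    by (rule psd_quadratic_form_eq_0_imp_mult_eq_0)
  then show ?thesis by (simp add: N_mult)
qed

lemma independent_if_pos_def_orthogonal:
  fixes P :: "real^'n^'n"
  assumes P: "pos_def_mat P" and "0 \<notin> S"
    and orth: "\<And>a b. a \<in> S \<Longrightarrow> b \<in> S \<Longrightarrow> a \<noteq> b \<Longrightarrow> a \<bullet> (P *v b) = 0"
  shows "independent S"
proof
  assume "dependent S"
  then obtain T u v where T: "finite T" "T \<subseteq> S" "(\<Sum>x\<in>T. u x *\<^sub>R x) = 0"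
    and v: "v \<in> T" "u v \<noteq> 0"
    unfolding real_vector.dependent_explicit by blast
  have "0 = (P *v v) \<bullet> (\<Sum>x\<in>T. u x *\<^sub>R x)"
    using T(3) by simp
  also have "\<dots> = (\<Sum>x\<in>T. if x = v then u v * (v \<bullet> (P *v v)) else 0)"
    unfolding inner_sum_right
    using T(2) v orth by (intro sum.cong refl) (auto simp: inner_commute)
  also have "\<dots> = u v * (v \<bullet> (P *v v))"
    using T(1) v(1) by simp
  finally show False
    using pos_def_mat_pos[OF P, of v] v T(2) \<open>0 \<notin> S\<close> by auto
qed

lemma finite_generalized_eigenvalues:
  fixes M P :: "real^'n^'n"
  assumes M: "transpose M = M" and P: "pos_def_mat P"
  shows "finite (generalized_eigenvalues M P)"
proof -
  define g where "g \<mu> = (SOME w. w \<noteq> 0 \<and> M *v w = \<mu> *\<^sub>R (P *v w))" for \<mu>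
  have g: "g \<mu> \<noteq> 0" "M *v g \<mu> = \<mu> *\<^sub>R (P *v g \<mu>)" if "\<mu> \<in> generalized_eigenvalues M P" for \<mu>
    using someI_ex[of "\<lambda>w. w \<noteq> 0 \<and> M *v w = \<mu> *\<^sub>R (P *v w)"] that
    unfolding g_def generalized_eigenvalues_def by auto
  \<comment> \<open>Symmetry of \<open>M\<close> and \<open>P\<close> makes eigenvectors of distinct eigenvalues \<open>P\<close>-orthogonal.\<close>
  have orth: "g \<mu> \<bullet> (P *v g \<mu>') = 0"
    if "\<mu> \<in> generalized_eigenvalues M P" "\<mu>' \<in> generalized_eigenvalues M P" "\<mu> \<noteq> \<mu>'" for \<mu> \<mu>'
  proof -
    have "\<mu>' * (g \<mu> \<bullet> (P *v g \<mu>')) = \<mu> * (g \<mu> \<bullet> (P *v g \<mu>'))"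
      using symmetric_matrix_inner_commute[OF M, of "g \<mu>" "g \<mu>'"] g[OF that(1)] g[OF that(2)]
        symmetric_matrix_inner_commute[OF pos_def_mat_symmetric[OF P], of "g \<mu>" "g \<mu>'"]
      by simp
    then show ?thesis using that(3) by simp
  qed
  have "card G \<le> CARD('n)" if G: "G \<subseteq> generalized_eigenvalues M P" for G
  proof -
    have "g \<mu> \<noteq> g \<mu>'" if "\<mu> \<in> G" "\<mu>' \<in> G" "\<mu> \<noteq> \<mu>'" for \<mu> \<mu>'
      using orth[of \<mu> \<mu>'] pos_def_mat_pos[OF P, of "g \<mu>"] g G that by fastforce
    then have "inj_on g G" by (meson inj_onI)
    moreover have "independent (g ` G)"
      using G g orth by (intro independent_if_pos_def_orthogonal[OF P]) force+
    ultimately show ?thesis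
      using independent_bound[of "g ` G"] by (simp add: card_image)
  qed
  then show ?thesis
    by (intro finite_if_finite_subsets_card_bdd[THEN conjunct1])
qed

lemma quadratic_form_le_Ch_max_mult:
  fixes M Q :: "real^'n^'n"
  assumes M: "transpose M = M" and Q: "pos_def_mat Q"
  shows "w \<bullet> (M *v w) \<le> Ch_max (M ** Q) * (w \<bullet> (matrix_inv Q *v w))"
proof -
  define P where "P = matrix_inv Q"
  have P: "pos_def_mat P"
    unfolding P_def by (rule pos_def_mat_matrix_inv[OF Q])
  have E: "real_eigenvalues (M ** Q) = generalized_eigenvalues M P"
    unfolding P_def by (rule real_eigenvalues_mult_eq_generalized_eigenvalues[OF pos_def_mat_invertible[OF Q]])
  obtain l v where v: "v \<noteq> 0" "v \<bullet> (M *v v) = l * (v \<bullet> (P *v v))"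
    and bound: "\<And>w. w \<bullet> (M *v w) \<le> l * (w \<bullet> (P *v w))"
    using generalized_Rayleigh_quotient_attains_max[OF P] by blast
  have "M *v v = l *\<^sub>R (P *v v)"
    using M pos_def_mat_symmetric[OF P] bound v(2) by (rule generalized_Rayleigh_maximizer_eigenvector)
  with v(1) have "l \<in> generalized_eigenvalues M P"
    by (auto simp: generalized_eigenvalues_def)
  moreover have "\<mu> \<le> l" if \<mu>: "\<mu> \<in> generalized_eigenvalues M P" for \<mu>
  proof -
    obtain w where w: "w \<noteq> 0" "M *v w = \<mu> *\<^sub>R (P *v w)"
      using \<mu> by (auto simp: generalized_eigenvalues_def)
    then have "\<mu> * (w \<bullet> (P *v w)) \<le> l * (w \<bullet> (P *v w))"
      using bound[of w] by simp
    then show ?thesis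
      using pos_def_mat_pos[OF P w(1)] by simp
  qed
  ultimately have "Ch_max (M ** Q) = l"
    unfolding Ch_max_def E using finite_generalized_eigenvalues[OF M P] by (intro Max_eqI)
  then show ?thesis
    using bound P_def by simp
qed

lemma Ch_max_mult_nonneg:
  fixes M Q :: "real^'n^'n"
  assumes M: "transpose M = M" "\<And>w. 0 \<le> w \<bullet> (M *v w)" and Q: "pos_def_mat Q"
  shows "0 \<le> Ch_max (M ** Q)"
proof -
  obtain w :: "real^'n" where "w \<noteq> 0"
    using norm_axis_1 by fastforce
  then have "0 < w \<bullet> (matrix_inv Q *v w)"
    by (rule pos_def_mat_pos[OF pos_def_mat_matrix_inv[OF Q]])
  moreover have "0 \<le> Ch_max (M ** Q) * (w \<bullet> (matrix_inv Q *v w))"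
    using M(2)[of w] quadratic_form_le_Ch_max_mult[OF M(1) Q, of w] by linarith
  ultimately show ?thesis
    by (simp add: zero_le_mult_iff)
qed

section \<open>Deviations from the weighted mean\<close>

lemma sum_weighted_deviations_eq_0:
  fixes W :: "'i \<Rightarrow> real^'n^'n"
  assumes "invertible (sum W S)"
  shows "(\<Sum>i\<in>S. W i *v (x i - matrix_inv (sum W S) *v (\<Sum>j\<in>S. W j *v x j))) = 0"
  using invertible_matrix_inv_cancel(1)[OF assms]
  by (simp add: matrix_vector_mult_diff_distrib sum_subtractf flip: sum_matrix_vector_mult)

lemma pos_def_mat_sum_matrix_inv:
  fixes V :: "'i \<Rightarrow> real^'n^'n"
  assumes "finite S" "S \<noteq> {}" "\<forall>i\<in>S. pos_def_mat (V i)"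
  shows "pos_def_mat (\<Sum>i\<in>S. matrix_inv (V i))"
  using assms by (intro pos_def_mat_sum) (auto intro: pos_def_mat_matrix_inv)

lemma sum_matrix_inv_quadratic_forms_eq:
  fixes V :: "'i \<Rightarrow> real^'n^'n"
  assumes "finite S" "S \<noteq> {}" and V: "\<forall>i\<in>S. pos_def_mat (V i)"
    and A: "A = matrix_inv (\<Sum>i\<in>S. matrix_inv (V i))"
  shows "(\<Sum>i\<in>S. (d i *\<^sub>R (V i *v w) - sum d S *\<^sub>R (A *v w))
      \<bullet> (matrix_inv (V i) *v (d i *\<^sub>R (V i *v w) - sum d S *\<^sub>R (A *v w))))
    = w \<bullet> (((\<Sum>i\<in>S. (d i)\<^sup>2 *\<^sub>R V i) - (sum d S)\<^sup>2 *\<^sub>R A) *v w)"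
proof -
  define D where "D = sum d S"
  define q where "q = A *v w"
  have S0: "(\<Sum>i\<in>S. matrix_inv (V i)) *v q = w"
    unfolding q_def A
    by (intro invertible_matrix_inv_cancel pos_def_mat_invertible pos_def_mat_sum_matrix_inv assms)
  have term_eq: "(d i *\<^sub>R (V i *v w) - D *\<^sub>R q) \<bullet> (matrix_inv (V i) *v (d i *\<^sub>R (V i *v w) - D *\<^sub>R q))
      = (d i)\<^sup>2 * (w \<bullet> (V i *v w)) - 2 * D * (d i * (q \<bullet> w)) + D\<^sup>2 * (q \<bullet> (matrix_inv (V i) *v q))"
    if "i \<in> S" for i
  proof -
    have inv: "invertible (V i)" and sym: "transpose (matrix_inv (V i)) = matrix_inv (V i)"
      using V that pos_def_mat_invertible pos_def_mat_symmetric pos_def_mat_matrix_inv by blast+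
    have "matrix_inv (V i) *v (V i *v w) = w"
      by (rule invertible_matrix_inv_cancel(2)[OF inv])
    moreover have "(V i *v w) \<bullet> (matrix_inv (V i) *v q) = q \<bullet> (matrix_inv (V i) *v (V i *v w))"
      by (rule symmetric_matrix_inner_commute[OF sym])
    ultimately show ?thesis
      by (simp add: matrix_vector_mult_diff_distrib matrix_vector_mult_scaleR inner_diff_left
          inner_diff_right power2_eq_square algebra_simps inner_commute[of w "V i *v w"])
  qed
  have "(\<Sum>i\<in>S. (d i *\<^sub>R (V i *v w) - D *\<^sub>R q) \<bullet> (matrix_inv (V i) *v (d i *\<^sub>R (V i *v w) - D *\<^sub>R q)))
      = (\<Sum>i\<in>S. (d i)\<^sup>2 * (w \<bullet> (V i *v w)) - 2 * D * (d i * (q \<bullet> w)) + D\<^sup>2 * (q \<bullet> (matrix_inv (V i) *v q)))"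
    using term_eq by (rule sum.cong[OF refl])
  also have "\<dots> = (\<Sum>i\<in>S. (d i)\<^sup>2 * (w \<bullet> (V i *v w))) - 2 * D * (D * (q \<bullet> w))
      + D\<^sup>2 * (q \<bullet> ((\<Sum>i\<in>S. matrix_inv (V i)) *v q))"
    by (simp add: D_def sum.distrib sum_subtractf sum_matrix_vector_mult inner_sum_right
        flip: sum_distrib_left sum_distrib_right)
  also have "\<dots> = (\<Sum>i\<in>S. (d i)\<^sup>2 * (w \<bullet> (V i *v w))) - 2 * D * (D * (q \<bullet> w)) + D\<^sup>2 * (q \<bullet> w)"
    by (simp only: S0)
  also have "\<dots> = w \<bullet> (((\<Sum>i\<in>S. (d i)\<^sup>2 *\<^sub>R V i) - D\<^sup>2 *\<^sub>R A) *v w)"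
    by (simp add: q_def matrix_vector_mult_diff_rdistrib sum_matrix_vector_mult inner_diff_right
        inner_sum_right inner_commute[of "A *v w"] power2_eq_square flip: scaleR_matrix_vector_assoc)
  finally show ?thesis
    by (simp add: D_def q_def)
qed

lemma inner_sum_deviations_sq_le:
  fixes V :: "'i \<Rightarrow> real^'n^'n" and x :: "'i \<Rightarrow> real^'n"
  assumes "finite S" "S \<noteq> {}" and V: "\<forall>i\<in>S. pos_def_mat (V i)"
    and A: "A = matrix_inv (\<Sum>i\<in>S. matrix_inv (V i))"
    and \<nu>: "\<nu> = A *v (\<Sum>i\<in>S. matrix_inv (V i) *v x i)"
  shows "(w \<bullet> (\<Sum>i\<in>S. d i *\<^sub>R (x i - \<nu>)))\<^sup>2
    \<le> (w \<bullet> (((\<Sum>i\<in>S. (d i)\<^sup>2 *\<^sub>R V i) - (sum d S)\<^sup>2 *\<^sub>R A) *v w))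
      * (\<Sum>i\<in>S. (x i - \<nu>) \<bullet> (matrix_inv (V i) *v (x i - \<nu>)))"
proof -
  define a where "a i = d i *\<^sub>R (V i *v w) - sum d S *\<^sub>R (A *v w)" for i
  have balance: "(\<Sum>i\<in>S. matrix_inv (V i) *v (x i - \<nu>)) = 0"
    unfolding \<nu> A
    using assms(1,2) V by (intro sum_weighted_deviations_eq_0 pos_def_mat_invertible pos_def_mat_sum_matrix_inv)
  \<comment> \<open>Because of this balance, the term with \<open>A\<close> in \<open>a i\<close> does not contribute.\<close>
  have "w \<bullet> (\<Sum>i\<in>S. d i *\<^sub>R (x i - \<nu>)) = (\<Sum>i\<in>S. a i \<bullet> (matrix_inv (V i) *v (x i - \<nu>)))"
  proof -
    have "a i \<bullet> (matrix_inv (V i) *v (x i - \<nu>))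
        = d i * (w \<bullet> (x i - \<nu>)) - sum d S * ((A *v w) \<bullet> (matrix_inv (V i) *v (x i - \<nu>)))"
      if "i \<in> S" for i
    proof -
      have "invertible (V i)" "transpose (V i) = V i"
        using V that pos_def_mat_invertible pos_def_mat_symmetric by blast+
      then have "(V i *v w) \<bullet> (matrix_inv (V i) *v (x i - \<nu>)) = w \<bullet> (x i - \<nu>)"
        by (metis inner_commute invertible_matrix_inv_cancel(1) symmetric_matrix_inner_commute)
      then show ?thesis
        by (simp add: a_def inner_diff_left)
    qed
    then have "(\<Sum>i\<in>S. a i \<bullet> (matrix_inv (V i) *v (x i - \<nu>)))
        = (\<Sum>i\<in>S. d i * (w \<bullet> (x i - \<nu>)))
          - sum d S * ((A *v w) \<bullet> (\<Sum>i\<in>S. matrix_inv (V i) *v (x i - \<nu>)))"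
      by (simp add: inner_sum_right sum_subtractf sum_distrib_left)
    then show ?thesis
      using balance by (simp add: inner_sum_right)
  qed
  moreover have "(\<Sum>i\<in>S. a i \<bullet> (matrix_inv (V i) *v a i))
      = w \<bullet> (((\<Sum>i\<in>S. (d i)\<^sup>2 *\<^sub>R V i) - (sum d S)\<^sup>2 *\<^sub>R A) *v w)"
    unfolding a_def using assms(1,2) V A by (rule sum_matrix_inv_quadratic_forms_eq)
  moreover have "(\<Sum>i\<in>S. a i \<bullet> (matrix_inv (V i) *v (x i - \<nu>)))\<^sup>2
      \<le> (\<Sum>i\<in>S. a i \<bullet> (matrix_inv (V i) *v a i))
        * (\<Sum>i\<in>S. (x i - \<nu>) \<bullet> (matrix_inv (V i) *v (x i - \<nu>)))"
    using V pos_def_mat_matrix_inv pos_def_mat_symmetric pos_def_mat_nonneg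
    by (intro sum_quadratic_forms_Cauchy_Schwarz) blast+
  ultimately show ?thesis by simp
qed

lemma weighted_deviation_ratio_le_Ch_max:
  fixes V :: "'i \<Rightarrow> real^'n^'n" and Q :: "real^'n^'n" and x :: "'i \<Rightarrow> real^'n"
  assumes "finite S" and V: "\<forall>i\<in>S. pos_def_mat (V i)" and Q: "pos_def_mat Q"
    and not_all_equal: "\<exists>i\<in>S. \<exists>j\<in>S. x i \<noteq> x j"
    and A: "A = matrix_inv (\<Sum>i\<in>S. matrix_inv (V i))"
    and \<nu>: "\<nu> = A *v (\<Sum>i\<in>S. matrix_inv (V i) *v x i)"
  shows "((\<Sum>i\<in>S. d i *\<^sub>R (x i - \<nu>)) \<bullet> (Q *v (\<Sum>i\<in>S. d i *\<^sub>R (x i - \<nu>))))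
      / (\<Sum>j\<in>S. (x j - \<nu>) \<bullet> (matrix_inv (V j) *v (x j - \<nu>)))
    \<le> Ch_max (((\<Sum>i\<in>S. (d i)\<^sup>2 *\<^sub>R V i) - (sum d S)\<^sup>2 *\<^sub>R A) ** Q)"
proof -
  define u where "u = (\<Sum>i\<in>S. d i *\<^sub>R (x i - \<nu>))"
  define T where "T = (\<Sum>j\<in>S. (x j - \<nu>) \<bullet> (matrix_inv (V j) *v (x j - \<nu>)))"
  define M where "M = (\<Sum>i\<in>S. (d i)\<^sup>2 *\<^sub>R V i) - (sum d S)\<^sup>2 *\<^sub>R A"
  define C where "C = Ch_max (M ** Q)"
  have "S \<noteq> {}" using not_all_equal by blast
  have "0 < T"
  proof -
    obtain m where m: "m \<in> S" "x m - \<nu> \<noteq> 0"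
      using not_all_equal by (metis eq_iff_diff_eq_0)
    have "0 < (x m - \<nu>) \<bullet> (matrix_inv (V m) *v (x m - \<nu>))"
      using V m by (intro pos_def_mat_pos pos_def_mat_matrix_inv) auto
    also have "\<dots> \<le> T"
      unfolding T_def using V m \<open>finite S\<close>
      by (intro member_le_sum) (auto intro: pos_def_mat_nonneg pos_def_mat_matrix_inv)
    finally show ?thesis .
  qed
  have CS: "(w \<bullet> u)\<^sup>2 \<le> (w \<bullet> (M *v w)) * T" for w
    unfolding u_def T_def M_def
    by (rule inner_sum_deviations_sq_le[OF \<open>finite S\<close> \<open>S \<noteq> {}\<close> V A \<nu>])
  have M_sym: "transpose M = M"
  proof -
    have "pos_def_mat A"
      unfolding A using \<open>finite S\<close> \<open>S \<noteq> {}\<close> V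
      by (intro pos_def_mat_matrix_inv pos_def_mat_sum_matrix_inv)
    then show ?thesis
      using V by (simp add: M_def transpose_diff transpose_sum transpose_scalar pos_def_mat_symmetric)
  qed
  have M_psd: "0 \<le> w \<bullet> (M *v w)" for w
    using order_trans[OF zero_le_power2 CS[of w]] \<open>0 < T\<close> by (simp add: zero_le_mult_iff)
  have "0 \<le> C"
    unfolding C_def using M_sym M_psd Q by (rule Ch_max_mult_nonneg)
  have "(u \<bullet> (Q *v u))\<^sup>2 \<le> ((Q *v u) \<bullet> (M *v (Q *v u))) * T"
    using CS[of "Q *v u"] by (simp add: inner_commute)
  also have "\<dots> \<le> C * ((Q *v u) \<bullet> (matrix_inv Q *v (Q *v u))) * T"
    unfolding C_def using quadratic_form_le_Ch_max_mult[OF M_sym Q] \<open>0 < T\<close>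
    by (intro mult_right_mono) auto
  also have "\<dots> = C * T * (u \<bullet> (Q *v u))"
    using invertible_matrix_inv_cancel(2)[OF pos_def_mat_invertible[OF Q]]
    by (simp add: inner_commute)
  finally have "u \<bullet> (Q *v u) \<le> C * T"
    using pos_def_mat_nonneg[OF Q, of u] \<open>0 \<le> C\<close> \<open>0 < T\<close>
    by (cases "u \<bullet> (Q *v u) = 0") (auto simp: power2_eq_square)
  then show ?thesis
    using \<open>0 < T\<close> by (simp add: u_def T_def M_def C_def divide_le_eq)
qed

theorem lemma3:
  fixes k :: nat
    and V :: "nat \<Rightarrow> real^'p^'p"
    and Q :: "real^'p^'p"
    and d :: "nat \<Rightarrow> real"
    and x :: "nat \<Rightarrow> real^'p"
  assumes "k \<ge> 2"
    and "\<forall>i\<in>{1..k}. pos_def_mat (V i)"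
    and "pos_def_mat Q"
    and "\<exists>i\<in>{1..k}. \<exists>j\<in>{1..k}. x i \<noteq> x j"
  shows
    "let A = matrix_inv (\<Sum>i=1..k. matrix_inv (V i));
         \<nu> = A *v (\<Sum>i=1..k. matrix_inv (V i) *v x i);
         u = (\<Sum>i=1..k. d i *\<^sub>R (x i - \<nu>));
         B = (u \<bullet> (Q *v u)) / (\<Sum>j=1..k. (x j - \<nu>) \<bullet> (matrix_inv (V j) *v (x j - \<nu>)))
     in B \<le> Ch_max (((\<Sum>i=1..k. (d i)\<^sup>2 *\<^sub>R V i) - (\<Sum>i=1..k. d i)\<^sup>2 *\<^sub>R A) ** Q)"
  unfolding Let_def
  by (rule weighted_deviation_ratio_le_Ch_max[OF finite_atLeastAtMost assms(2-4) refl refl])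

end
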